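(* Let $A\in\mathbb{R}^{n\times n}$ be Hurwitz, $B\in\mathbb{R}^{n\times m}$, $C\in\mathbb{R}^{m\times n}$, $D\in\mathbb{R}^{m\times m}$ with $\|D\|<1$, and consider the system $\Sigma:\ \dot{\mathbf{x}}(t)=A\mathbf{x}(t)+B\,\Phi\circ(I-D\Phi)^{-1}(C\mathbf{x}(t))$. Then the equilibrium $x=0$ of $\Sigma$ is globally asymptotically stable if and only if it is locally asymptotically stable.
   Context: $\|D\|$ is the spectral norm. $\Phi:\mathbb{R}^m\to\mathbb{R}^m$ is the componentwise ReLU, $\Phi(q)_i=\max(q_i,0)$. For $\|D\|<1$ the map $q\mapsto q-D\Phi(q)$ is a bijection of $\mathbb{R}^m$, and $(I-D\Phi)^{-1}$ denotes its inverse; $\Sigma$ is the closed loop of $\dot{\mathbf{x}}=A\mathbf{x}+B\mathbf{w}$, $\mathbf{z}=C\mathbf{x}+D\mathbf{w}$, $\mathbf{w}=\Phi(\mathbf{z})$. Stability notions: (i) for each $\varepsilon>0$ there is $\delta>0$ with $\|\mathbf{x}(0)\|<\delta\Rightarrow\|\mathbf{x}(t)\|<\varepsilon$ for all $t\geq0$; (ii) there is $\delta>0$ with $\|\mathbf{x}(0)\|<\delta\Rightarrow\lim_{t\to\infty}\mathbf{x}(t)=0$; (iii) $\lim_{t\to\infty}\mathbf{x}(t)=0$ for every initial state $\mathbf{x}(0)$. The origin is locally asymptotically stable if (i) and (ii) hold, and globally asymptotically stable if (i) and (iii) hold. *)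

theory Defs
  imports "HOL-Analysis.Analysis"
begin

definition hurwitz :: "real^'n^'n \<Rightarrow> bool" where
  "hurwitz A \<longleftrightarrow>
     (\<forall>s::complex. det (mat s - (\<chi> i j. complex_of_real (A $ i $ j))) = 0 \<longrightarrow> Re s < 0)"

definition relu :: "real^'m \<Rightarrow> real^'m" where
  "relu q = (\<chi> i. max (q $ i) 0)"

definition spec_norm :: "real^'m^'k \<Rightarrow> real" where
  "spec_norm D = onorm (\<lambda>v. D *v v)"

definition closed_loop :: "real^'n^'n \<Rightarrow> real^'m^'n \<Rightarrow> real^'n^'m \<Rightarrow> real^'m^'m
    \<Rightarrow> real^'n \<Rightarrow> real^'n" where
  "closed_loop A B C D x =
     A *v x + B *v relu (inv (\<lambda>q. q - D *v relu q) (C *v x))"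

definition is_solution :: "('a::real_normed_vector \<Rightarrow> 'a) \<Rightarrow> (real \<Rightarrow> 'a) \<Rightarrow> bool" where
  "is_solution f x \<longleftrightarrow> (\<forall>t\<ge>0. (x has_vector_derivative f (x t)) (at t within {0..}))"

definition lyap_stable :: "('a::real_normed_vector \<Rightarrow> 'a) \<Rightarrow> bool" where
  "lyap_stable f \<longleftrightarrow> (\<forall>\<epsilon>>0. \<exists>\<delta>>0. \<forall>x. is_solution f x \<and> norm (x 0) < \<delta> \<longrightarrow>
       (\<forall>t\<ge>0. norm (x t) < \<epsilon>))"

definition locally_attractive :: "('a::real_normed_vector \<Rightarrow> 'a) \<Rightarrow> bool" where
  "locally_attractive f \<longleftrightarrow> (\<exists>\<delta>>0. \<forall>x. is_solution f x \<and> norm (x 0) < \<delta> \<longrightarrow>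
       (x \<longlongrightarrow> 0) at_top)"

definition globally_attractive :: "('a::real_normed_vector \<Rightarrow> 'a) \<Rightarrow> bool" where
  "globally_attractive f \<longleftrightarrow> (\<forall>x. is_solution f x \<longrightarrow> (x \<longlongrightarrow> 0) at_top)"

definition locally_asymp_stable :: "('a::real_normed_vector \<Rightarrow> 'a) \<Rightarrow> bool" where
  "locally_asymp_stable f \<longleftrightarrow> lyap_stable f \<and> locally_attractive f"

definition globally_asymp_stable :: "('a::real_normed_vector \<Rightarrow> 'a) \<Rightarrow> bool" where
  "globally_asymp_stable f \<longleftrightarrow> lyap_stable f \<and> globally_attractive f"

end

theory Submission
  imports Defs
begin

text \<open>The closed loop is positively homogeneous: ReLU commutes with positive scalings, hence
so do the bijection \<open>q \<mapsto> q - D \<Phi>(q)\<close> and its inverse, and therefore so does the whole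
vector field. Scaling a solution by \<open>c > 0\<close> thus gives a solution, so any trajectory can be
shrunk into the basin of attraction of the origin and blown up again afterwards: local
attractivity is already global.\<close>

definition pos_homogeneous :: "('a::real_vector \<Rightarrow> 'b::real_vector) \<Rightarrow> bool" where
  "pos_homogeneous f \<longleftrightarrow> (\<forall>c>0. \<forall>x. f (c *\<^sub>R x) = c *\<^sub>R f x)"

lemma relu_scaleR: "0 \<le> c \<Longrightarrow> relu (c *\<^sub>R q) = c *\<^sub>R relu q"
  unfolding relu_def by (vector max_mult_distrib_left)

lemma norm_relu_diff_le: "norm (relu p - relu q) \<le> norm (p - q)"
  unfolding relu_def
  by (rule norm_le_componentwise_cart) (simp add: max_def abs_if)

lemma norm_matrix_vector_le_spec_norm: "norm (D *v v) \<le> spec_norm D * norm v"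
  unfolding spec_norm_def by (rule onorm) simp

lemma spec_norm_nonneg: "0 \<le> spec_norm D"
  unfolding spec_norm_def by (rule onorm_pos_le) simp

lemma dist_relu_feedback_le: "dist (D *v relu p) (D *v relu q) \<le> spec_norm D * dist p q"
proof -
  have "dist (D *v relu p) (D *v relu q) = norm (D *v (relu p - relu q))"
    by (simp add: dist_norm matrix_vector_mult_diff_distrib)
  also have "\<dots> \<le> spec_norm D * norm (relu p - relu q)"
    by (rule norm_matrix_vector_le_spec_norm)
  also have "\<dots> \<le> spec_norm D * dist p q"
    unfolding dist_norm by (rule mult_left_mono[OF norm_relu_diff_le spec_norm_nonneg])
  finally show ?thesis .
qed

text \<open>The preimages of \<open>y\<close> under \<open>id - h\<close> are exactly the fixed points of the contraction
\<open>q \<mapsto> y + h q\<close>.\<close>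

lemma bij_diff_contraction:
  fixes h :: "'a::{real_normed_vector, complete_space} \<Rightarrow> 'a"
  assumes "0 \<le> k" "k < 1" and contr: "\<And>p q. dist (h p) (h q) \<le> k * dist p q"
  shows "bij (\<lambda>q. q - h q)"
  unfolding bij_iff
proof
  fix y :: 'a
  have "\<exists>!q. y + h q = q"
    by (rule banach_fix_type[OF assms(1,2)]) (simp add: contr dist_add_cancel)
  moreover have "q - h q = y \<longleftrightarrow> y + h q = q" for q
    by (auto simp: algebra_simps)
  ultimately show "\<exists>!q. q - h q = y"
    by simp
qed

lemma bij_relu_feedback:
  assumes "spec_norm D < 1"
  shows "bij (\<lambda>q. q - D *v relu q)"
  using spec_norm_nonneg assms dist_relu_feedback_le by (rule bij_diff_contraction)

lemma pos_homogeneous_inv: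
  assumes "bij g" "pos_homogeneous g"
  shows "pos_homogeneous (inv g)"
  unfolding pos_homogeneous_def
proof (intro allI impI)
  fix c :: real and y assume "0 < c"
  have "g (c *\<^sub>R inv g y) = c *\<^sub>R g (inv g y)"
    using \<open>0 < c\<close> assms(2) by (simp add: pos_homogeneous_def)
  also have "\<dots> = c *\<^sub>R y"
    using assms(1) by (simp add: bij_is_surj surj_f_inv_f)
  finally show "inv g (c *\<^sub>R y) = c *\<^sub>R inv g y"
    using assms(1) by (metis bij_inv_eq_iff)
qed

lemma pos_homogeneous_closed_loop:
  assumes "spec_norm D < 1"
  shows "pos_homogeneous (closed_loop A B C D)"
proof -
  let ?g = "\<lambda>q. q - D *v relu q"
  have "pos_homogeneous ?g"
    by (simp add: pos_homogeneous_def relu_scaleR matrix_vector_mult_scaleR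
        scaleR_right_diff_distrib)
  then have "pos_homogeneous (inv ?g)"
    using bij_relu_feedback[OF assms] by (intro pos_homogeneous_inv)
  then show ?thesis
    by (simp add: pos_homogeneous_def closed_loop_def matrix_vector_mult_scaleR
        relu_scaleR scaleR_right_distrib)
qed

lemma is_solution_scaleR:
  assumes "pos_homogeneous f" "0 < c" "is_solution f x"
  shows "is_solution f (\<lambda>t. c *\<^sub>R x t)"
  unfolding is_solution_def
proof (intro allI impI)
  fix t :: real assume "0 \<le> t"
  then have "(x has_vector_derivative f (x t)) (at t within {0..})"
    using assms(3) unfolding is_solution_def by blast
  then have "((\<lambda>t. c *\<^sub>R x t) has_vector_derivative c *\<^sub>R f (x t)) (at t within {0..})"
    by (rule bounded_linear.has_vector_derivative[OF bounded_linear_scaleR_right])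
  then show "((\<lambda>t. c *\<^sub>R x t) has_vector_derivative f (c *\<^sub>R x t)) (at t within {0..})"
    using assms(1,2) by (simp add: pos_homogeneous_def)
qed

lemma locally_attractive_imp_globally_attractive:
  assumes "pos_homogeneous f" "locally_attractive f"
  shows "globally_attractive f"
  unfolding globally_attractive_def
proof (intro allI impI)
  obtain \<delta> where "\<delta> > 0" and
    attr: "\<And>x. is_solution f x \<Longrightarrow> norm (x 0) < \<delta> \<Longrightarrow> (x \<longlongrightarrow> 0) at_top"
    using assms(2) unfolding locally_attractive_def by blast
  fix x assume "is_solution f x"
  define c where "c = \<delta> / 2 / (norm (x 0) + 1)"
  have "0 < norm (x 0) + 1"
    using norm_ge_zero[of "x 0"] by linarith
  then have "0 < c"
    using \<open>\<delta> > 0\<close> by (simp add: c_def)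
  have "norm (c *\<^sub>R x 0) < \<delta>"
  proof -
    have "norm (c *\<^sub>R x 0) \<le> c * (norm (x 0) + 1)"
      using \<open>0 < c\<close> by simp
    also have "\<dots> = \<delta> / 2"
      using \<open>0 < norm (x 0) + 1\<close> by (simp add: c_def field_simps)
    finally show ?thesis
      using \<open>\<delta> > 0\<close> by simp
  qed
  then have "((\<lambda>t. c *\<^sub>R x t) \<longlongrightarrow> 0) at_top"
    using attr is_solution_scaleR[OF assms(1) \<open>0 < c\<close> \<open>is_solution f x\<close>] by blast
  then have "((\<lambda>t. inverse c *\<^sub>R (c *\<^sub>R x t)) \<longlongrightarrow> inverse c *\<^sub>R 0) at_top"
    by (intro tendsto_intros)
  then show "(x \<longlongrightarrow> 0) at_top"
    using \<open>0 < c\<close> by simp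
qed

lemma globally_asymp_stable_iff_locally:
  assumes "pos_homogeneous f"
  shows "globally_asymp_stable f \<longleftrightarrow> locally_asymp_stable f"
proof -
  have "globally_attractive f \<Longrightarrow> locally_attractive f"
    unfolding globally_attractive_def locally_attractive_def by (metis zero_less_one)
  then show ?thesis
    using locally_attractive_imp_globally_attractive[OF assms]
    unfolding globally_asymp_stable_def locally_asymp_stable_def by blast
qed

theorem theorem1:
  fixes A :: "real^'n^'n" and B :: "real^'m^'n" and C :: "real^'n^'m" and D :: "real^'m^'m"
  assumes "hurwitz A" and "spec_norm D < 1"
  shows "globally_asymp_stable (closed_loop A B C D) \<longleftrightarrow>
         locally_asymp_stable (closed_loop A B C D)"
  using pos_homogeneous_closed_loop[OF assms(2)] by (rule globally_asymp_stable_iff_locally)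

end
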